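(* Let $G=(V,E)$ be a connected undirected graph with positive edge weights $w$, and run the distributed algorithm described in the context synchronously at every node. Then for every node $v\in V$ and every node $t\in V$: at any time after the first $\mathrm{maxhop}(v,t)+1$ phases have been completed, the variable $\mathrm{NH}[t]$ at $v$ equals $\mathsf{NH}_v(t)$; and at any time after the first $\mathcal{D}(G)+2$ phases have been completed, the variable $\mathrm{PH}[t]$ at $v$ equals $\mathsf{PH}_v(t)$.
   Context: Graph notions. $G=(V,E)$ is connected, undirected, with weights $w(e)>0$; $N(v)$ is the set of neighbors of $v$ and $N[v]=N(v)\cup\{v\}$. The length of a path is the sum of its edge weights; $\mathrm{dist}(s,t)$ is the length of a shortest $s$–$t$ path. For $s\neq t$, $\mathrm{maxhop}(s,t)$ is the maximum number of edges of a shortest (minimum-length) $s$–$t$ path, $\mathrm{maxhop}(s,s)=0$, and $\mathcal{D}(G)=\max_{s,t\in V}\mathrm{maxhop}(s,t)$. $\mathsf{NH}_v(t)$ is the set of neighbors of $v$ that lie on some shortest path from $v$ to $t$; $\mathsf{PH}_v(s)$ is the set of neighbors $u$ of $v$ such that $v$ lies on some shortest path from $s$ to $u$. Algorithm (at each node $v$). Initialization: for all $t\in V$: $D[t]=+\infty$, $\mathrm{NH}[t]=\mathrm{PH}[t]=\emptyset$, and for all $u\in N[v]$: $B[u,t]=0$, $S[u,t]=0$; then $S[v,v]=1$, $D[v]=0$. Execution proceeds in synchronous phases; in each phase every node $v$ sends, for every $t\in V$, the message $(t,D[t],S[v,t],B[v,t])$ to every neighbor, receives all messages sent to it by its neighbors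 in that phase, and processes each of them (in arbitrary order) as follows. On receipt of $(t,d,s,b)$ from $u\in N(v)$: remove $u$ from $\mathrm{NH}[t]$ and from $\mathrm{PH}[t]$; if $d+w(\{u,v\})<D[t]$ set $D[t]\leftarrow d+w(\{u,v\})$; else if $d+w(\{u,v\})=D[t]$ add $u$ to $\mathrm{NH}[t]$; else if $d-w(\{u,v\})=D[t]$ add $u$ to $\mathrm{PH}[t]$. Then set $S[u,t]\leftarrow s$, $B[u,t]\leftarrow b$; if $t\neq v$ set $S[v,t]\leftarrow\sum_{x\in\mathrm{NH}[t]}S[x,t]$; set $B[v,t]\leftarrow S[v,t]\cdot\sum_{x\in\mathrm{PH}[t]}\frac{B[x,t]+1}{S[x,t]}$ (a term with $S[x,t]=0$ is taken as $0$); finally set $C\leftarrow\sum_{x\neq v}B[v,x]$. *)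

theory Defs
  imports Main "HOL-Library.Extended_Real"
begin

definition wf_graph :: "'a set \<Rightarrow> 'a set set \<Rightarrow> bool" where
  "wf_graph V E \<longleftrightarrow> finite V \<and> (\<forall>e\<in>E. e \<subseteq> V \<and> card e = 2)"

definition nbrs :: "'a set set \<Rightarrow> 'a \<Rightarrow> 'a set" where
  "nbrs E v = {u. {u, v} \<in> E}"

fun is_walk :: "'a set \<Rightarrow> 'a set set \<Rightarrow> 'a list \<Rightarrow> bool" where
  "is_walk V E [] = False"
| "is_walk V E [x] = (x \<in> V)"
| "is_walk V E (x # y # r) = ({x, y} \<in> E \<and> is_walk V E (y # r))"

definition is_path :: "'a set \<Rightarrow> 'a set set \<Rightarrow> 'a list \<Rightarrow> bool" where
  "is_path V E p \<longleftrightarrow> is_walk V E p \<and> distinct p"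

definition paths_between :: "'a set \<Rightarrow> 'a set set \<Rightarrow> 'a \<Rightarrow> 'a \<Rightarrow> 'a list set" where
  "paths_between V E s t = {p. is_path V E p \<and> hd p = s \<and> last p = t}"

fun wlen :: "('a set \<Rightarrow> real) \<Rightarrow> 'a list \<Rightarrow> real" where
  "wlen w [] = 0"
| "wlen w [x] = 0"
| "wlen w (x # y # r) = w {x, y} + wlen w (y # r)"

definition connected_graph :: "'a set \<Rightarrow> 'a set set \<Rightarrow> bool" where
  "connected_graph V E \<longleftrightarrow> V \<noteq> {} \<and> (\<forall>s\<in>V. \<forall>t\<in>V. paths_between V E s t \<noteq> {})"

definition dist :: "'a set \<Rightarrow> 'a set set \<Rightarrow> ('a set \<Rightarrow> real) \<Rightarrow> 'a \<Rightarrow> 'a \<Rightarrow> real" where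
  "dist V E w s t = Min (wlen w ` paths_between V E s t)"

definition shortest_paths :: "'a set \<Rightarrow> 'a set set \<Rightarrow> ('a set \<Rightarrow> real) \<Rightarrow> 'a \<Rightarrow> 'a \<Rightarrow> 'a list set" where
  "shortest_paths V E w s t = {p \<in> paths_between V E s t. wlen w p = dist V E w s t}"

definition maxhop :: "'a set \<Rightarrow> 'a set set \<Rightarrow> ('a set \<Rightarrow> real) \<Rightarrow> 'a \<Rightarrow> 'a \<Rightarrow> nat" where
  "maxhop V E w s t = (if s = t then 0
      else Max ((\<lambda>p. length p - 1) ` shortest_paths V E w s t))"

definition hopdiam :: "'a set \<Rightarrow> 'a set set \<Rightarrow> ('a set \<Rightarrow> real) \<Rightarrow> nat" where
  "hopdiam V E w = Max {maxhop V E w s t | s t. s \<in> V \<and> t \<in> V}"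

definition NHset :: "'a set \<Rightarrow> 'a set set \<Rightarrow> ('a set \<Rightarrow> real) \<Rightarrow> 'a \<Rightarrow> 'a \<Rightarrow> 'a set" where
  "NHset V E w v t = {u \<in> nbrs E v. \<exists>r. v # u # r \<in> shortest_paths V E w v t}"

definition PHset :: "'a set \<Rightarrow> 'a set set \<Rightarrow> ('a set \<Rightarrow> real) \<Rightarrow> 'a \<Rightarrow> 'a \<Rightarrow> 'a set" where
  "PHset V E w v s = {u \<in> nbrs E v. \<exists>r. r @ [v, u] \<in> shortest_paths V E w s u}"

record 'a nstate =
  Dv  :: "'a \<Rightarrow> ereal"
  NHv :: "'a \<Rightarrow> 'a set"
  PHv :: "'a \<Rightarrow> 'a set"
  Sv  :: "'a \<Rightarrow> 'a \<Rightarrow> real"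
  Bv  :: "'a \<Rightarrow> 'a \<Rightarrow> real"
  Cv  :: real

definition init_state :: "'a \<Rightarrow> 'a nstate" where
  "init_state v = \<lparr> Dv = (\<lambda>t. \<infinity>)(v := 0), NHv = (\<lambda>t. {}), PHv = (\<lambda>t. {}),
      Sv = (\<lambda>u t. 0)(v := (\<lambda>t. 0)(v := 1)), Bv = (\<lambda>u t. 0), Cv = 0 \<rparr>"

definition process ::
  "'a set \<Rightarrow> ('a set \<Rightarrow> real) \<Rightarrow> 'a \<Rightarrow> 'a \<times> 'a \<times> ereal \<times> real \<times> real \<Rightarrow> 'a nstate \<Rightarrow> 'a nstate" where
  "process V w v msg st = (case msg of (u, t, d, s, b) \<Rightarrow>
     let wu = ereal (w {u, v});
         NH0 = (NHv st)(t := NHv st t - {u});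
         PH0 = (PHv st)(t := PHv st t - {u});
         (D1, NH1, PH1) =
           (if d + wu < Dv st t then ((Dv st)(t := d + wu), NH0, PH0)
            else if d + wu = Dv st t then (Dv st, NH0(t := insert u (NH0 t)), PH0)
            else if d - wu = Dv st t then (Dv st, NH0, PH0(t := insert u (PH0 t)))
            else (Dv st, NH0, PH0));
         S1 = (Sv st)(u := (Sv st u)(t := s));
         B1 = (Bv st)(u := (Bv st u)(t := b));
         S2 = (if t \<noteq> v then S1(v := (S1 v)(t := (\<Sum>x\<in>NH1 t. S1 x t))) else S1);
         B2 = B1(v := (B1 v)(t := S2 v t * (\<Sum>x\<in>PH1 t. (B1 x t + 1) / S2 x t)));
         C2 = (\<Sum>x\<in>V - {v}. B2 v x)
     in \<lparr> Dv = D1, NHv = NH1, PHv = PH1, Sv = S2, Bv = B2, Cv = C2 \<rparr>)"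

text \<open>Message sent by u about destination t, computed from u's state at the start of the phase.
  (Division by S[x,t] = 0 yields 0 in Isabelle, matching the convention.)\<close>
definition msg_of :: "('a \<Rightarrow> 'a nstate) \<Rightarrow> 'a \<times> 'a \<Rightarrow> 'a \<times> 'a \<times> ereal \<times> real \<times> real" where
  "msg_of \<sigma> ut = (case ut of (u, t) \<Rightarrow> (u, t, Dv (\<sigma> u) t, Sv (\<sigma> u) u t, Bv (\<sigma> u) u t))"

text \<open>ord k v: the (arbitrary) order in which node v processes, in phase k+1,
  the messages (one per neighbour u and destination t, identified by (u,t)).\<close>
definition valid_order :: "'a set \<Rightarrow> 'a set set \<Rightarrow> (nat \<Rightarrow> 'a \<Rightarrow> ('a \<times> 'a) list) \<Rightarrow> bool" where
  "valid_order V E ord \<longleftrightarrow>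
     (\<forall>k. \<forall>v\<in>V. distinct (ord k v) \<and> set (ord k v) = nbrs E v \<times> V)"

fun run :: "'a set \<Rightarrow> ('a set \<Rightarrow> real) \<Rightarrow> (nat \<Rightarrow> 'a \<Rightarrow> ('a \<times> 'a) list) \<Rightarrow> nat \<Rightarrow> 'a \<Rightarrow> 'a nstate" where
  "run V w ord 0 = init_state"
| "run V w ord (Suc k) = (\<lambda>v. fold (process V w v) (map (msg_of (run V w ord k)) (ord k v))
                                  (run V w ord k v))"

text \<open>State of node v after k complete phases and the first i messages of phase k+1 processed.\<close>
definition state_at :: "'a set \<Rightarrow> ('a set \<Rightarrow> real) \<Rightarrow> (nat \<Rightarrow> 'a \<Rightarrow> ('a \<times> 'a) list) \<Rightarrow> nat \<Rightarrow> nat \<Rightarrow> 'a \<Rightarrow> 'a nstate" where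
  "state_at V w ord k i v = fold (process V w v) (map (msg_of (run V w ord k)) (take i (ord k v)))
                                  (run V w ord k v)"

end

theory Submission
  imports Defs
begin

text \<open>The estimates D[t] follow a synchronous Bellman-Ford computation: they never
  drop below dist(v,t), and after k phases D[t] at v is at most the length of every
  v-t path with at most k edges, so D[t] = dist(v,t) at v from phase maxhop(v,t) on.
  Once v is settled, the message (t,d) of a neighbour u is tested against the final
  value: u enters NH[t] iff d + w(u,v) = dist(v,t), and PH[t] iff d - w(u,v) = dist(v,t).
  The NH-test is then already exact, because a neighbour u in NH_v(t) starts a
  shortest u-t path with fewer edges, so u is settled too; the PH-test needs
  d = dist(u,t), which holds once every node is settled, after hopdiam phases. Every
  neighbour reports once per phase, so one phase later all entries of NH[t] and PH[t]
  stem from exact tests.\<close>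

abbreviation receive ::
  "'a set \<Rightarrow> ('a set \<Rightarrow> real) \<Rightarrow> 'a \<Rightarrow> ('a \<Rightarrow> 'a nstate) \<Rightarrow> ('a \<times> 'a) list
     \<Rightarrow> 'a nstate \<Rightarrow> 'a nstate"
  where "receive V w v \<sigma> L \<equiv> fold (process V w v) (map (msg_of \<sigma>) L)"

lemma run_Suc_eq_state_at: "run V w ord (Suc k) v = state_at V w ord k (length (ord k v)) v"
  by (simp add: state_at_def)

lemma Dv_init_state: "Dv (init_state v) t = (if t = v then 0 else \<infinity>)"
  by (simp add: init_state_def)

lemma Dv_process:
  "Dv (process V w v (u, t', d, s, b) st) t =
     (if t = t' \<and> d + ereal (w {u, v}) < Dv st t then d + ereal (w {u, v}) else Dv st t)"
  by (simp add: process_def Let_def)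

lemma NHv_process:
  "NHv (process V w v (u, t', d, s, b) st) t =
     (if t = t' then
        (if d + ereal (w {u, v}) < Dv st t then NHv st t - {u}
         else if d + ereal (w {u, v}) = Dv st t then insert u (NHv st t - {u})
         else NHv st t - {u})
      else NHv st t)"
  by (simp add: process_def Let_def)

lemma PHv_process:
  "PHv (process V w v (u, t', d, s, b) st) t =
     (if t = t' then
        (if d + ereal (w {u, v}) < Dv st t then PHv st t - {u}
         else if d + ereal (w {u, v}) = Dv st t then PHv st t - {u}
         else if d - ereal (w {u, v}) = Dv st t then insert u (PHv st t - {u})
         else PHv st t - {u})
      else PHv st t)"
  by (simp add: process_def Let_def)

lemma Dv_receive_le: "Dv (receive V w v \<sigma> L st) t \<le> Dv st t"
proof (induction L arbitrary: st)
  case (Cons x L)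
  obtain u t' where "x = (u, t')" by force
  then have "Dv (process V w v (msg_of \<sigma> x) st) t \<le> Dv st t"
    by (auto simp: msg_of_def Dv_process)
  with Cons.IH show ?case by (auto intro: order_trans)
qed simp

lemma Dv_receive_le_msg:
  "(u, t) \<in> set L \<Longrightarrow> Dv (receive V w v \<sigma> L st) t \<le> Dv (\<sigma> u) t + ereal (w {u, v})"
proof (induction L arbitrary: st)
  case (Cons x L)
  show ?case
  proof (cases "(u, t) \<in> set L")
    case True
    with Cons.IH show ?thesis by simp
  next
    case False
    with Cons.prems have "x = (u, t)" by simp
    then have "Dv (process V w v (msg_of \<sigma> x) st) t \<le> Dv (\<sigma> u) t + ereal (w {u, v})"
      by (simp add: msg_of_def Dv_process not_less)
    with Dv_receive_le[of V w v \<sigma> L "process V w v (msg_of \<sigma> x) st" t]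
    show ?thesis by simp
  qed
qed simp

lemma Dv_receive_ge:
  assumes "\<delta> \<le> Dv st t" and "\<And>u. (u, t) \<in> set L \<Longrightarrow> \<delta> \<le> Dv (\<sigma> u) t + ereal (w {u, v})"
  shows "\<delta> \<le> Dv (receive V w v \<sigma> L st) t"
  using assms
proof (induction L arbitrary: st)
  case (Cons x L)
  obtain u t' where "x = (u, t')" by force
  with Cons.prems have "\<delta> \<le> Dv (process V w v (msg_of \<sigma> x) st) t"
    by (auto simp: msg_of_def Dv_process)
  with Cons show ?case by simp
qed simp

lemma hops_receive_subset:
  "NHv (receive V w v \<sigma> L st) t \<subseteq> NHv st t \<union> fst ` set L"
  "PHv (receive V w v \<sigma> L st) t \<subseteq> PHv st t \<union> fst ` set L"
proof (induction L arbitrary: st)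
  case (Cons x L)
  obtain u t' where x: "x = (u, t')" by force
  { case 1
    have "NHv (process V w v (msg_of \<sigma> x) st) t \<subseteq> NHv st t \<union> {u}"
      by (auto simp: x msg_of_def NHv_process)
    with Cons.IH(1)[of "process V w v (msg_of \<sigma> x) st"] show ?case by (auto simp: x) }
  { case 2
    have "PHv (process V w v (msg_of \<sigma> x) st) t \<subseteq> PHv st t \<union> {u}"
      by (auto simp: x msg_of_def PHv_process)
    with Cons.IH(2)[of "process V w v (msg_of \<sigma> x) st"] show ?case by (auto simp: x) }
qed simp_all

lemma NHv_receive:
  assumes "Dv st t = \<delta>" and "\<And>u. (u, t) \<in> set L \<Longrightarrow> \<delta> \<le> Dv (\<sigma> u) t + ereal (w {u, v})"
  shows "NHv (receive V w v \<sigma> L st) t =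
    (NHv st t - {u. (u, t) \<in> set L})
      \<union> {u. (u, t) \<in> set L \<and> Dv (\<sigma> u) t + ereal (w {u, v}) = \<delta>}"
  using assms
proof (induction L arbitrary: st)
  case (Cons x L)
  obtain u t' where x: "x = (u, t')" by force
  let ?st = "process V w v (msg_of \<sigma> x) st"
  have ge: "t' = t \<Longrightarrow> \<delta> \<le> Dv (\<sigma> u) t + ereal (w {u, v})"
    using Cons.prems(2) by (simp add: x)
  have "Dv ?st t = \<delta>"
    using ge Cons.prems(1) by (auto simp: x msg_of_def Dv_process)
  with Cons have IH: "NHv (receive V w v \<sigma> L ?st) t =
    (NHv ?st t - {u. (u, t) \<in> set L})
      \<union> {u. (u, t) \<in> set L \<and> Dv (\<sigma> u) t + ereal (w {u, v}) = \<delta>}"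
    by simp
  have "NHv ?st t = (if t' = t then (NHv st t - {u})
      \<union> {u'. u' = u \<and> Dv (\<sigma> u) t + ereal (w {u, v}) = \<delta>} else NHv st t)"
    using ge Cons.prems(1) by (auto simp: x msg_of_def NHv_process)
  with IH show ?case by (auto simp: x)
qed simp

lemma PHv_receive:
  assumes "Dv st t = \<delta>" and "\<And>u. (u, t) \<in> set L \<Longrightarrow> \<delta> \<le> Dv (\<sigma> u) t + ereal (w {u, v})"
  shows "PHv (receive V w v \<sigma> L st) t =
    (PHv st t - {u. (u, t) \<in> set L})
      \<union> {u. (u, t) \<in> set L \<and> Dv (\<sigma> u) t + ereal (w {u, v}) \<noteq> \<delta>
            \<and> Dv (\<sigma> u) t - ereal (w {u, v}) = \<delta>}"
  using assms
proof (induction L arbitrary: st)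
  case (Cons x L)
  obtain u t' where x: "x = (u, t')" by force
  let ?st = "process V w v (msg_of \<sigma> x) st"
  have ge: "t' = t \<Longrightarrow> \<delta> \<le> Dv (\<sigma> u) t + ereal (w {u, v})"
    using Cons.prems(2) by (simp add: x)
  have "Dv ?st t = \<delta>"
    using ge Cons.prems(1) by (auto simp: x msg_of_def Dv_process)
  with Cons have IH: "PHv (receive V w v \<sigma> L ?st) t =
    (PHv ?st t - {u. (u, t) \<in> set L})
      \<union> {u. (u, t) \<in> set L \<and> Dv (\<sigma> u) t + ereal (w {u, v}) \<noteq> \<delta>
            \<and> Dv (\<sigma> u) t - ereal (w {u, v}) = \<delta>}"
    by simp
  have "PHv ?st t = (if t' = t then (PHv st t - {u})
      \<union> {u'. u' = u \<and> Dv (\<sigma> u) t + ereal (w {u, v}) \<noteq> \<delta>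
            \<and> Dv (\<sigma> u) t - ereal (w {u, v}) = \<delta>} else PHv st t)"
    using ge Cons.prems(1) by (auto simp: x msg_of_def PHv_process)
  with IH show ?case by (auto simp: x)
qed simp

lemma wlen_append: "wlen w (xs @ y # ys) = wlen w (xs @ [y]) + wlen w (y # ys)"
proof (induction xs)
  case (Cons x xs)
  then show ?case by (cases xs) auto
qed simp

lemma wlen_rev: "wlen w (rev p) = wlen w p"
proof (induction w p rule: wlen.induct)
  case (3 w x y r)
  have "wlen w (rev (x # y # r)) = wlen w (rev r @ [y]) + wlen w [y, x]"
    using wlen_append[of w "rev r" y "[x]"] by simp
  with 3 show ?case by (simp add: insert_commute)
qed auto

lemma wlen_nonneg: "\<forall>e\<in>E. 0 < w e \<Longrightarrow> is_walk V E p \<Longrightarrow> 0 \<le> wlen w p"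
proof (induction p rule: is_walk.induct)
  case (3 V E x y r)
  then show ?case by (simp add: add_nonneg_nonneg less_imp_le)
qed auto

lemma wlen_pos: "\<forall>e\<in>E. 0 < w e \<Longrightarrow> is_walk V E p \<Longrightarrow> 2 \<le> length p \<Longrightarrow> 0 < wlen w p"
proof -
  assume pos: "\<forall>e\<in>E. 0 < w e" and walk: "is_walk V E p" and "2 \<le> length p"
  then obtain x y r where p: "p = x # y # r"
    by (metis One_nat_def Suc_1 Suc_le_length_iff)
  with pos walk show ?thesis
    using wlen_nonneg[OF pos, of V "y # r"] by (simp add: add_pos_nonneg)
qed

lemma paths_between_self: "p \<in> paths_between V E t t \<Longrightarrow> p = [t]"
proof -
  assume p: "p \<in> paths_between V E t t"
  then obtain x q where pq: "p = x # q"
    unfolding paths_between_def is_path_def by (cases p) auto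
  have "q = []"
  proof (rule ccontr)
    assume "q \<noteq> []"
    then have "last p \<in> set q" using pq by simp
    moreover have "hd p = last p" using p unfolding paths_between_def by simp
    ultimately show False using p pq unfolding paths_between_def is_path_def by simp
  qed
  with p pq show ?thesis unfolding paths_between_def by simp
qed

locale finite_graph =
  fixes V :: "'a set" and E :: "'a set set"
  assumes wf: "wf_graph V E"
begin

lemma finite_V: "finite V"
  using wf unfolding wf_graph_def by blast

lemma edge_in_V: "{x, y} \<in> E \<Longrightarrow> x \<in> V \<and> y \<in> V"
  using wf unfolding wf_graph_def by blast

lemma edge_neq: "{x, y} \<in> E \<Longrightarrow> x \<noteq> y"
  using wf unfolding wf_graph_def by fastforce

lemma is_walk_append:
  "is_walk V E (xs @ y # ys) \<longleftrightarrow> is_walk V E (xs @ [y]) \<and> is_walk V E (y # ys)"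
proof (induction xs)
  case Nil
  then show ?case by (cases ys) (auto dest: edge_in_V)
next
  case (Cons x xs)
  then show ?case by (cases xs) auto
qed

lemma is_walk_rev: "is_walk V E p \<Longrightarrow> is_walk V E (rev p)"
proof (induction p)
  case (Cons x p)
  show ?case
  proof (cases p)
    case (Cons y r)
    with Cons.prems have "is_walk V E [y, x]"
      by (auto simp: insert_commute dest: edge_in_V)
    with Cons.IH Cons.prems \<open>p = y # r\<close> show ?thesis
      using is_walk_append[of "rev r" y "[x]"] by simp
  qed (use Cons.prems in simp)
qed simp

lemma set_walk_subset: "is_walk V E p \<Longrightarrow> set p \<subseteq> V"
proof (induction p)
  case (Cons x p)
  then show ?case by (cases p) (auto dest: edge_in_V)
qed simp

lemma rev_paths_between: "p \<in> paths_between V E s t \<Longrightarrow> rev p \<in> paths_between V E t s"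
  unfolding paths_between_def is_path_def
  using is_walk_rev by (auto simp: hd_rev last_rev)

lemma finite_paths_between: "finite (paths_between V E s t)"
proof (rule finite_subset[OF _ finite_subset_distinct[OF finite_V]])
  show "paths_between V E s t \<subseteq> {p. set p \<subseteq> V \<and> distinct p}"
    using set_walk_subset unfolding paths_between_def is_path_def by auto
qed

end

locale pos_weighted_connected_graph = finite_graph V E
  for V :: "'a set" and E :: "'a set set" +
  fixes w :: "'a set \<Rightarrow> real"
  assumes connected: "connected_graph V E"
    and weights_pos: "\<forall>e\<in>E. 0 < w e"
begin

lemma dist_le_wlen: "p \<in> paths_between V E s t \<Longrightarrow> dist V E w s t \<le> wlen w p"
  unfolding dist_def using finite_paths_between by (intro Min_le) auto

lemma shortest_path_exists:
  assumes "s \<in> V" and "t \<in> V"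
  obtains p where "p \<in> shortest_paths V E w s t"
proof -
  have "paths_between V E s t \<noteq> {}"
    using connected assms unfolding connected_graph_def by blast
  then have "dist V E w s t \<in> wlen w ` paths_between V E s t"
    unfolding dist_def using finite_paths_between by (intro Min_in) auto
  then obtain p where "p \<in> paths_between V E s t" "wlen w p = dist V E w s t"
    by auto
  then show ?thesis
    by (intro that) (simp add: shortest_paths_def)
qed

lemma dist_sym: "dist V E w t s = dist V E w s t"
proof -
  have "paths_between V E t s = rev ` paths_between V E s t"
  proof (intro equalityI subsetI)
    fix p assume "p \<in> paths_between V E t s"
    then show "p \<in> rev ` paths_between V E s t"
      using rev_paths_between by (metis rev_image_eqI rev_rev_ident)
  qed (auto intro: rev_paths_between)
  then show ?thesis
    unfolding dist_def by (simp add: image_image wlen_rev)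
qed

lemma rev_shortest_paths: "p \<in> shortest_paths V E w s t \<Longrightarrow> rev p \<in> shortest_paths V E w t s"
  unfolding shortest_paths_def using rev_paths_between dist_sym by (simp add: wlen_rev)

lemma wlen_path_nonneg: "p \<in> paths_between V E s t \<Longrightarrow> 0 \<le> wlen w p"
  using wlen_nonneg[OF weights_pos] unfolding paths_between_def is_path_def by blast

lemma dist_self: "t \<in> V \<Longrightarrow> dist V E w t t = 0"
proof -
  assume t: "t \<in> V"
  then obtain p where "p \<in> shortest_paths V E w t t"
    using shortest_path_exists by blast
  then show ?thesis
    unfolding shortest_paths_def using paths_between_self by fastforce
qed

lemma length_shortest_path_le_maxhop:
  assumes p: "p \<in> shortest_paths V E w s t"
  shows "length p - 1 \<le> maxhop V E w s t"
proof (cases "s = t")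
  case True
  with p have "p \<in> paths_between V E t t"
    by (simp add: shortest_paths_def)
  then show ?thesis
    using paths_between_self by fastforce
next
  case False
  have "shortest_paths V E w s t \<subseteq> paths_between V E s t"
    unfolding shortest_paths_def by blast
  then have "finite (shortest_paths V E w s t)"
    using finite_paths_between by (rule finite_subset)
  then have "length p - 1 \<le> Max ((\<lambda>p. length p - 1) ` shortest_paths V E w s t)"
    using p by (intro Max_ge) auto
  with False show ?thesis
    unfolding maxhop_def by simp
qed

lemma maxhop_le_hopdiam: "s \<in> V \<Longrightarrow> t \<in> V \<Longrightarrow> maxhop V E w s t \<le> hopdiam V E w"
proof -
  assume "s \<in> V" "t \<in> V"
  moreover have "{maxhop V E w s t | s t. s \<in> V \<and> t \<in> V}
      = (\<lambda>(s, t). maxhop V E w s t) ` (V \<times> V)"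
    by auto
  ultimately show ?thesis
    unfolding hopdiam_def using finite_V
    by (metis (mono_tags, lifting) Max_ge finite_SigmaI finite_imageI mem_Collect_eq)
qed

lemma split_path:
  assumes q: "q \<in> paths_between V E u t" and v: "v \<in> set q"
  obtains a b where "q = a @ v # b"
    and "a @ [v] \<in> paths_between V E u v" and "v # b \<in> paths_between V E v t"
    and "wlen w q = wlen w (a @ [v]) + wlen w (v # b)"
proof -
  obtain a b where q_eq: "q = a @ v # b"
    using split_list[OF v] by blast
  with q have "is_walk V E (a @ [v])" "is_walk V E (v # b)"
      and "distinct (a @ [v])" "distinct (v # b)"
    using is_walk_append[of a v b] unfolding paths_between_def is_path_def by auto
  with q q_eq have "a @ [v] \<in> paths_between V E u v" "v # b \<in> paths_between V E v t"
    unfolding paths_between_def is_path_def by (cases a; auto)+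
  with q_eq show ?thesis
    using that wlen_append[of w a v b] by blast
qed

lemma Cons_path_between:
  assumes "q \<in> paths_between V E u t" and "{u, v} \<in> E" and "v \<notin> set q"
  shows "v # q \<in> paths_between V E v t" and "wlen w (v # q) = w {u, v} + wlen w q"
proof -
  obtain r where q: "q = u # r"
    using assms(1) unfolding paths_between_def is_path_def by (cases q) auto
  with assms show "v # q \<in> paths_between V E v t"
    unfolding paths_between_def is_path_def by (simp add: insert_commute)
  from q show "wlen w (v # q) = w {u, v} + wlen w q"
    by (simp add: insert_commute)
qed

lemma dist_triangle_edge:
  assumes "{u, v} \<in> E" and "t \<in> V"
  shows "dist V E w v t \<le> w {u, v} + dist V E w u t"
proof -
  obtain q where "q \<in> shortest_paths V E w u t"
    using shortest_path_exists edge_in_V assms by blast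
  then have q: "q \<in> paths_between V E u t" "wlen w q = dist V E w u t"
    unfolding shortest_paths_def by auto
  show ?thesis
  proof (cases "v \<in> set q")
    case True
    then obtain a b where "a @ [v] \<in> paths_between V E u v" "v # b \<in> paths_between V E v t"
        "wlen w q = wlen w (a @ [v]) + wlen w (v # b)"
      using split_path[OF q(1)] by blast
    moreover have "0 < w {u, v}"
      using weights_pos assms by blast
    ultimately show ?thesis
      using q dist_le_wlen wlen_path_nonneg by fastforce
  next
    case False
    with q assms have "v # q \<in> paths_between V E v t" "wlen w (v # q) = w {u, v} + wlen w q"
      using Cons_path_between by auto
    with q show ?thesis
      using dist_le_wlen by fastforce
  qed
qed

lemma ereal_dist_le_edge_plus:
  assumes "{u, v} \<in> E" and "t \<in> V" and "ereal (dist V E w u t) \<le> d"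
  shows "ereal (dist V E w v t) \<le> d + ereal (w {u, v})"
proof -
  have "ereal (dist V E w v t) \<le> ereal (dist V E w u t) + ereal (w {u, v})"
    using dist_triangle_edge[OF assms(1,2)] by (simp add: add.commute)
  also have "\<dots> \<le> d + ereal (w {u, v})"
    using assms(3) by (rule add_right_mono)
  finally show ?thesis .
qed

lemma shortest_path_ConsD:
  assumes "v # u # r \<in> shortest_paths V E w v t"
  shows "u # r \<in> shortest_paths V E w u t" and "dist V E w u t + w {u, v} = dist V E w v t"
proof -
  have p: "v # u # r \<in> paths_between V E v t" "wlen w (v # u # r) = dist V E w v t"
    using assms unfolding shortest_paths_def by auto
  then have ur: "u # r \<in> paths_between V E u t" and e: "{u, v} \<in> E"
    unfolding paths_between_def is_path_def by (auto simp: insert_commute)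
  have "t \<in> V"
    using p set_walk_subset last_in_set[of "v # u # r"]
    unfolding paths_between_def is_path_def by fastforce
  then have "dist V E w v t \<le> w {u, v} + dist V E w u t"
    using dist_triangle_edge[OF e] by blast
  moreover have "dist V E w u t \<le> wlen w (u # r)"
    using dist_le_wlen[OF ur] .
  moreover have "wlen w (v # u # r) = w {u, v} + wlen w (u # r)"
    by (simp add: insert_commute)
  ultimately have "wlen w (u # r) = dist V E w u t" "dist V E w u t + w {u, v} = dist V E w v t"
    using p by linarith+
  with ur show "u # r \<in> shortest_paths V E w u t" "dist V E w u t + w {u, v} = dist V E w v t"
    unfolding shortest_paths_def by auto
qed

text \<open>For the backward direction: if dist(u,t) + w(u,v) = dist(v,t), a shortest
  u-t path cannot pass through v, as its suffix from v would be shorter than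
  dist(v,t); so prepending v to it yields a shortest v-t path.\<close>

lemma NHset_iff:
  assumes "t \<in> V"
  shows "u \<in> NHset V E w v t \<longleftrightarrow> {u, v} \<in> E \<and> dist V E w u t + w {u, v} = dist V E w v t"
proof
  assume "u \<in> NHset V E w v t"
  then show "{u, v} \<in> E \<and> dist V E w u t + w {u, v} = dist V E w v t"
    unfolding NHset_def nbrs_def using shortest_path_ConsD(2) by blast
next
  assume "{u, v} \<in> E \<and> dist V E w u t + w {u, v} = dist V E w v t"
  then have e: "{u, v} \<in> E" and d: "dist V E w u t + w {u, v} = dist V E w v t"
    by auto
  obtain q where "q \<in> shortest_paths V E w u t"
    using shortest_path_exists edge_in_V[OF e] assms by blast
  then have q: "q \<in> paths_between V E u t" "wlen w q = dist V E w u t"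
    unfolding shortest_paths_def by auto
  have "v \<notin> set q"
  proof
    assume "v \<in> set q"
    then obtain a b where ab: "q = a @ v # b" "a @ [v] \<in> paths_between V E u v"
        "v # b \<in> paths_between V E v t" and split: "wlen w q = wlen w (a @ [v]) + wlen w (v # b)"
      using split_path[OF q(1)] by blast
    have "u \<noteq> v"
      using edge_neq e by blast
    with ab have "2 \<le> length (a @ [v])"
      unfolding paths_between_def by (cases a) auto
    with ab(2) have "0 < wlen w (a @ [v])"
      using wlen_pos[OF weights_pos] unfolding paths_between_def is_path_def by blast
    moreover have "dist V E w v t \<le> wlen w (v # b)"
      using dist_le_wlen[OF ab(3)] .
    moreover have "0 < w {u, v}"
      using weights_pos e by blast
    ultimately show False
      using q(2) d split by linarith
  qed
  with q e have "v # q \<in> shortest_paths V E w v t"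
    using Cons_path_between d unfolding shortest_paths_def by auto
  moreover obtain r where "q = u # r"
    using q(1) unfolding paths_between_def is_path_def by (cases q) auto
  ultimately show "u \<in> NHset V E w v t"
    unfolding NHset_def nbrs_def using e by blast
qed

lemma PHset_iff_NHset: "u \<in> PHset V E w v s \<longleftrightarrow> v \<in> NHset V E w u s"
proof -
  have "(\<exists>r. r @ [v, u] \<in> shortest_paths V E w s u) \<longleftrightarrow> (\<exists>r. u # v # r \<in> shortest_paths V E w u s)"
  proof
    assume "\<exists>r. r @ [v, u] \<in> shortest_paths V E w s u"
    then obtain r where "r @ [v, u] \<in> shortest_paths V E w s u" by blast
    from rev_shortest_paths[OF this] show "\<exists>r. u # v # r \<in> shortest_paths V E w u s" by auto
  next
    assume "\<exists>r. u # v # r \<in> shortest_paths V E w u s"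
    then obtain r where "u # v # r \<in> shortest_paths V E w u s" by blast
    from rev_shortest_paths[OF this] show "\<exists>r. r @ [v, u] \<in> shortest_paths V E w s u" by auto
  qed
  then show ?thesis
    unfolding PHset_def NHset_def nbrs_def by (auto simp: insert_commute)
qed

end


locale synchronous_run = pos_weighted_connected_graph V E w
  for V :: "'a set" and E :: "'a set set" and w :: "'a set \<Rightarrow> real" +
  fixes ord :: "nat \<Rightarrow> 'a \<Rightarrow> ('a \<times> 'a) list"
  assumes valid_order: "valid_order V E ord"
begin

lemma set_ord: "v \<in> V \<Longrightarrow> set (ord k v) = nbrs E v \<times> V"
  using valid_order unfolding valid_order_def by blast

lemma run_Dv_ge_dist: "v \<in> V \<Longrightarrow> t \<in> V \<Longrightarrow> ereal (dist V E w v t) \<le> Dv (run V w ord k v) t"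
proof (induction k arbitrary: v)
  case 0
  then show ?case by (simp add: Dv_init_state dist_self)
next
  case (Suc k)
  have "ereal (dist V E w v t) \<le> Dv (run V w ord k u) t + ereal (w {u, v})"
    if "(u, t) \<in> set (ord k v)" for u
  proof -
    have "{u, v} \<in> E"
      using that \<open>v \<in> V\<close> set_ord unfolding nbrs_def by blast
    with Suc.IH \<open>t \<in> V\<close> show ?thesis
      using ereal_dist_le_edge_plus edge_in_V by blast
  qed
  with Suc show ?case
    using Dv_receive_ge[of "ereal (dist V E w v t)" "run V w ord k v"] by simp
qed

lemma run_Dv_le_wlen:
  "is_walk V E p \<Longrightarrow> length p \<le> Suc k \<Longrightarrow> Dv (run V w ord k (hd p)) (last p) \<le> ereal (wlen w p)"
proof (induction k arbitrary: p)
  case 0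
  then obtain x where "p = [x]" by (cases p) auto
  then show ?case by (simp add: Dv_init_state)
next
  case (Suc k)
  obtain x q where p: "p = x # q"
    using Suc.prems by (cases p) auto
  show ?case
  proof (cases q)
    case Nil
    have "Dv (run V w ord (Suc k) x) x \<le> Dv (run V w ord k x) x"
      using Dv_receive_le by simp
    also have "\<dots> \<le> 0"
      using Suc.IH[of "[x]"] Suc.prems p Nil by (simp add: zero_ereal_def)
    finally show ?thesis
      using p Nil by (simp add: zero_ereal_def)
  next
    case (Cons y r)
    let ?t = "last p"
    have e: "{y, x} \<in> E" and walk: "is_walk V E (y # r)"
      using Suc.prems p Cons by (auto simp: insert_commute)
    have "x \<in> V" "?t \<in> V"
      using edge_in_V[OF e] set_walk_subset[OF walk] p Cons by auto
    then have "(y, ?t) \<in> set (ord k x)"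
      using set_ord e unfolding nbrs_def by blast
    then have "Dv (run V w ord (Suc k) x) ?t \<le> Dv (run V w ord k y) ?t + ereal (w {y, x})"
      using Dv_receive_le_msg by simp
    also have "\<dots> \<le> ereal (wlen w (y # r)) + ereal (w {y, x})"
      using Suc.IH[OF walk] Suc.prems p Cons by (intro add_right_mono) simp
    also have "\<dots> = ereal (wlen w p)"
      using p Cons by (simp add: insert_commute)
    finally show ?thesis
      using p by simp
  qed
qed

lemma run_Dv_eq_dist:
  assumes "v \<in> V" and "t \<in> V" and "maxhop V E w v t \<le> k"
  shows "Dv (run V w ord k v) t = ereal (dist V E w v t)"
proof -
  obtain p where p: "p \<in> shortest_paths V E w v t"
    using shortest_path_exists assms by blast
  then have "length p \<le> Suc k"
    using length_shortest_path_le_maxhop assms(3) by fastforce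
  with p have "Dv (run V w ord k v) t \<le> ereal (dist V E w v t)"
    using run_Dv_le_wlen[of p k]
    unfolding shortest_paths_def paths_between_def is_path_def by auto
  with run_Dv_ge_dist assms show ?thesis
    by (meson antisym)
qed

lemma hops_run_subset_nbrs:
  assumes "v \<in> V"
  shows "NHv (run V w ord k v) t \<subseteq> nbrs E v" and "PHv (run V w ord k v) t \<subseteq> nbrs E v"
proof (induction k)
  case (Suc k)
  have senders: "fst ` set (ord k v) \<subseteq> nbrs E v"
    using set_ord[OF assms] by auto
  { case 1
    with Suc.IH(1) senders show ?case
      using hops_receive_subset(1)[of V w v "run V w ord k" "ord k v" "run V w ord k v" t] by (simp, blast) }
  { case 2
    with Suc.IH(2) senders show ?case
      using hops_receive_subset(2)[of V w v "run V w ord k" "ord k v" "run V w ord k v" t] by (simp, blast) }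
qed (simp_all add: init_state_def)

lemma next_hop_test_iff:
  assumes e: "{u, v} \<in> E" and t: "t \<in> V" and k: "maxhop V E w v t \<le> k"
  shows "Dv (run V w ord k u) t + ereal (w {u, v}) = ereal (dist V E w v t)
    \<longleftrightarrow> u \<in> NHset V E w v t"
proof
  have u: "u \<in> V"
    using edge_in_V[OF e] by blast
  assume test: "Dv (run V w ord k u) t + ereal (w {u, v}) = ereal (dist V E w v t)"
  have "ereal (dist V E w u t) \<le> Dv (run V w ord k u) t"
    using run_Dv_ge_dist[OF u t] .
  moreover have "dist V E w v t \<le> w {u, v} + dist V E w u t"
    using dist_triangle_edge[OF e t] .
  ultimately have "dist V E w u t + w {u, v} = dist V E w v t"
    using test by (cases "Dv (run V w ord k u) t") auto
  with e t show "u \<in> NHset V E w v t"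
    using NHset_iff by blast
next
  assume "u \<in> NHset V E w v t"
  then obtain r where sp: "v # u # r \<in> shortest_paths V E w v t"
    unfolding NHset_def by blast
  note suffix = shortest_path_ConsD[OF sp]
  have "length (u # r) \<le> Suc k"
    using length_shortest_path_le_maxhop[OF sp] k by simp
  with suffix(1) have "Dv (run V w ord k u) t \<le> ereal (dist V E w u t)"
    using run_Dv_le_wlen[of "u # r" k]
    unfolding shortest_paths_def paths_between_def is_path_def by auto
  with run_Dv_ge_dist[of u t k] suffix(1) have "Dv (run V w ord k u) t = ereal (dist V E w u t)"
    using edge_in_V e t by (meson antisym)
  with suffix(2) show "Dv (run V w ord k u) t + ereal (w {u, v}) = ereal (dist V E w v t)"
    by simp
qed

lemma prev_hop_test_iff:
  assumes e: "{u, v} \<in> E" and t: "t \<in> V" and k: "hopdiam V E w \<le> k"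
  shows "Dv (run V w ord k u) t + ereal (w {u, v}) \<noteq> ereal (dist V E w v t)
      \<and> Dv (run V w ord k u) t - ereal (w {u, v}) = ereal (dist V E w v t)
    \<longleftrightarrow> u \<in> PHset V E w v t"
proof -
  have u: "u \<in> V"
    using edge_in_V[OF e] by blast
  have "0 < w {u, v}"
    using weights_pos e by blast
  moreover have "Dv (run V w ord k u) t = ereal (dist V E w u t)"
    using run_Dv_eq_dist[OF u t] maxhop_le_hopdiam[OF u t] k by simp
  ultimately have "Dv (run V w ord k u) t + ereal (w {u, v}) \<noteq> ereal (dist V E w v t)
      \<and> Dv (run V w ord k u) t - ereal (w {u, v}) = ereal (dist V E w v t)
    \<longleftrightarrow> dist V E w v t + w {v, u} = dist V E w u t"
    by (auto simp: insert_commute)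
  also have "\<dots> \<longleftrightarrow> u \<in> PHset V E w v t"
    using NHset_iff[OF t, of v u] PHset_iff_NHset e by (simp add: insert_commute)
  finally show ?thesis .
qed

lemma dist_le_run_msg:
  assumes "(u, t) \<in> set (ord k v)" and "v \<in> V"
  shows "ereal (dist V E w v t) \<le> Dv (run V w ord k u) t + ereal (w {u, v})"
proof -
  have "{u, v} \<in> E" "t \<in> V"
    using assms set_ord unfolding nbrs_def by blast+
  then show ?thesis
    using ereal_dist_le_edge_plus run_Dv_ge_dist edge_in_V by blast
qed

lemma NHv_state_at:
  fixes i :: nat
  assumes v: "v \<in> V" and t: "t \<in> V" and k: "maxhop V E w v t \<le> k"
  defines "A \<equiv> {u. (u, t) \<in> set (take i (ord k v))}"
  shows "NHv (state_at V w ord k i v) t = (NHv (run V w ord k v) t - A) \<union> (A \<inter> NHset V E w v t)"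
proof -
  have "ereal (dist V E w v t) \<le> Dv (run V w ord k u) t + ereal (w {u, v})"
    if "(u, t) \<in> set (take i (ord k v))" for u
    using dist_le_run_msg[OF in_set_takeD[OF that] v] .
  with run_Dv_eq_dist[OF v t k]
  have "NHv (state_at V w ord k i v) t = (NHv (run V w ord k v) t - A)
      \<union> {u. (u, t) \<in> set (take i (ord k v))
            \<and> Dv (run V w ord k u) t + ereal (w {u, v}) = ereal (dist V E w v t)}"
    unfolding state_at_def A_def by (rule NHv_receive)
  also have "{u. (u, t) \<in> set (take i (ord k v))
            \<and> Dv (run V w ord k u) t + ereal (w {u, v}) = ereal (dist V E w v t)}
      = A \<inter> NHset V E w v t"
    using next_hop_test_iff[OF _ t k] set_ord[OF v] in_set_takeD
    unfolding A_def nbrs_def by fast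
  finally show ?thesis .
qed

lemma PHv_state_at:
  fixes i :: nat
  assumes v: "v \<in> V" and t: "t \<in> V" and k: "hopdiam V E w \<le> k"
  defines "A \<equiv> {u. (u, t) \<in> set (take i (ord k v))}"
  shows "PHv (state_at V w ord k i v) t = (PHv (run V w ord k v) t - A) \<union> (A \<inter> PHset V E w v t)"
proof -
  have "ereal (dist V E w v t) \<le> Dv (run V w ord k u) t + ereal (w {u, v})"
    if "(u, t) \<in> set (take i (ord k v))" for u
    using dist_le_run_msg[OF in_set_takeD[OF that] v] .
  moreover have "Dv (run V w ord k v) t = ereal (dist V E w v t)"
    using run_Dv_eq_dist[OF v t] maxhop_le_hopdiam[OF v t] k by simp
  ultimately
  have "PHv (state_at V w ord k i v) t = (PHv (run V w ord k v) t - A)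
      \<union> {u. (u, t) \<in> set (take i (ord k v))
            \<and> Dv (run V w ord k u) t + ereal (w {u, v}) \<noteq> ereal (dist V E w v t)
            \<and> Dv (run V w ord k u) t - ereal (w {u, v}) = ereal (dist V E w v t)}"
    unfolding state_at_def A_def by (intro PHv_receive)
  also have "{u. (u, t) \<in> set (take i (ord k v))
            \<and> Dv (run V w ord k u) t + ereal (w {u, v}) \<noteq> ereal (dist V E w v t)
            \<and> Dv (run V w ord k u) t - ereal (w {u, v}) = ereal (dist V E w v t)}
      = A \<inter> PHset V E w v t"
    using prev_hop_test_iff[OF _ t k] set_ord[OF v] in_set_takeD
    unfolding A_def nbrs_def by fast
  finally show ?thesis .
qed

lemma NHv_state_at_eq_NHset:
  assumes v: "v \<in> V" and t: "t \<in> V" and k: "maxhop V E w v t < k"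
  shows "NHv (state_at V w ord k i v) t = NHset V E w v t"
proof -
  obtain j where j: "k = Suc j"
    using k by (cases k) auto
  with k have hop: "maxhop V E w v t \<le> j"
    by simp
  have senders: "{u. (u, t) \<in> set (take (length (ord j v)) (ord j v))} = nbrs E v"
    using set_ord[OF v] t by auto
  have "NHv (run V w ord k v) t = NHv (state_at V w ord j (length (ord j v)) v) t"
    by (simp only: j run_Suc_eq_state_at)
  also have "\<dots> = (NHv (run V w ord j v) t - nbrs E v) \<union> (nbrs E v \<inter> NHset V E w v t)"
    using NHv_state_at[OF v t hop, of "length (ord j v)"] unfolding senders .
  also have "\<dots> = NHset V E w v t"
    using hops_run_subset_nbrs[OF v] unfolding NHset_def by blast
  finally have "NHv (run V w ord k v) t = NHset V E w v t" .
  moreover have "maxhop V E w v t \<le> k"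
    using k by simp
  ultimately show ?thesis
    using NHv_state_at[OF v t, of k i] by blast
qed

lemma PHv_state_at_eq_PHset:
  assumes v: "v \<in> V" and t: "t \<in> V" and k: "hopdiam V E w < k"
  shows "PHv (state_at V w ord k i v) t = PHset V E w v t"
proof -
  obtain j where j: "k = Suc j"
    using k by (cases k) auto
  with k have hop: "hopdiam V E w \<le> j"
    by simp
  have senders: "{u. (u, t) \<in> set (take (length (ord j v)) (ord j v))} = nbrs E v"
    using set_ord[OF v] t by auto
  have "PHv (run V w ord k v) t = PHv (state_at V w ord j (length (ord j v)) v) t"
    by (simp only: j run_Suc_eq_state_at)
  also have "\<dots> = (PHv (run V w ord j v) t - nbrs E v) \<union> (nbrs E v \<inter> PHset V E w v t)"
    using PHv_state_at[OF v t hop, of "length (ord j v)"] unfolding senders .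
  also have "\<dots> = PHset V E w v t"
    using hops_run_subset_nbrs[OF v] unfolding PHset_def by blast
  finally have "PHv (run V w ord k v) t = PHset V E w v t" .
  moreover have "hopdiam V E w \<le> k"
    using k by simp
  ultimately show ?thesis
    using PHv_state_at[OF v t, of k i] by blast
qed

end

theorem lemma2:
  fixes V :: "'a set" and E :: "'a set set" and w :: "'a set \<Rightarrow> real"
    and ord :: "nat \<Rightarrow> 'a \<Rightarrow> ('a \<times> 'a) list"
  assumes "wf_graph V E"
    and "connected_graph V E"
    and "\<forall>e\<in>E. w e > 0"
    and "valid_order V E ord"
  shows "\<forall>v\<in>V. \<forall>t\<in>V.
           (\<forall>k i. maxhop V E w v t + 1 \<le> k \<longrightarrow> i \<le> length (ord k v) \<longrightarrow>
                 NHv (state_at V w ord k i v) t = NHset V E w v t)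
         \<and> (\<forall>k i. hopdiam V E w + 2 \<le> k \<longrightarrow> i \<le> length (ord k v) \<longrightarrow>
                 PHv (state_at V w ord k i v) t = PHset V E w v t)"
proof -
  interpret synchronous_run V E w ord
    using assms by unfold_locales auto
  show ?thesis
    using NHv_state_at_eq_NHset PHv_state_at_eq_PHset by (auto simp: Suc_le_eq)
qed

end
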